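(* Let $V\subset\mathbb{S}^3$ be a saturated open set and $\zeta$ a smooth unit vector field on $V$ whose integral curves are great circles. Define $f:V\to\mathbb{S}^2:=\{q\in\operatorname{Im}\mathbb{H}:|q|=1\}$ by $f(p)=\overline{p}\cdot\zeta(p)$ (quaternionic multiplication). Then $f$ is constant along the integral curves of $\zeta$, and $f$ is a harmonic map (with respect to the round metrics of $\mathbb{S}^3$ and $\mathbb{S}^2$) if and only if $\zeta$ is a harmonic unit vector field, i.e. $\Delta\zeta+|\nabla\zeta|^2\zeta=0$ on $V$.
   Context: $\mathbb{S}^3$ is the set of unit quaternions in $\mathbb{H}\cong\mathbb{R}^4$ with round metric and Levi-Civita connection $\nabla$; $\overline{p}$ is the quaternionic conjugate. An open set $V\subset\mathbb{S}^3$ carrying a unit vector field $\zeta$ whose integral curves are great circles is called saturated if for every $x\in V$ the whole great circle through $x$ tangent to $\zeta(x)$ lies in $V$. $\Delta\zeta=\operatorname{trace}\nabla^2\zeta$ is the rough Laplacian, where $\nabla^2_{v,w}\zeta=\nabla_v\nabla_w\zeta-\nabla_{\nabla_vw}\zeta$. A unit vector field is harmonic (a critical point of the energy $\tfrac12\int|\nabla\zeta|^2$ under variations through unit vector fields) iff $\Delta\zeta+|\nabla\zeta|^2\zeta=0$. A map is harmonic if its tension field (trace of its Hessian) vanishes. *)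

theory Defs
  imports "HOL-Analysis.Analysis"
begin

text \<open>Quaternions are modelled as real^4 with components 1,2,3,4 = (real, i, j, k).\<close>

type_synonym quat = "real^4"

definition qmul :: "quat \<Rightarrow> quat \<Rightarrow> quat" where
  "qmul p q = vector
     [p$1*q$1 - p$2*q$2 - p$3*q$3 - p$4*q$4,
      p$1*q$2 + p$2*q$1 + p$3*q$4 - p$4*q$3,
      p$1*q$3 - p$2*q$4 + p$3*q$1 + p$4*q$2,
      p$1*q$4 + p$2*q$3 - p$3*q$2 + p$4*q$1]"

definition qconj :: "quat \<Rightarrow> quat" where
  "qconj p = vector [p$1, - p$2, - p$3, - p$4]"

definition S3 :: "quat set" where
  "S3 = sphere 0 1"

definition S2 :: "quat set" where
  "S2 = {q. q$1 = 0 \<and> norm q = 1}"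

fun Ck :: "nat \<Rightarrow> 'a::real_normed_vector set \<Rightarrow> ('a \<Rightarrow> 'b::real_normed_vector) \<Rightarrow> bool" where
  "Ck 0 S f = continuous_on S f"
| "Ck (Suc k) S f = (f differentiable_on S \<and>
      (\<forall>v. Ck k S (\<lambda>x. frechet_derivative f (at x) v)))"

definition Cinf_on :: "'a::real_normed_vector set \<Rightarrow> ('a \<Rightarrow> 'b::real_normed_vector) \<Rightarrow> bool" where
  "Cinf_on S f = (\<forall>k. Ck k S f)"

definition smooth_on_S3 :: "quat set \<Rightarrow> (quat \<Rightarrow> 'b::real_normed_vector) \<Rightarrow> bool" where
  "smooth_on_S3 V g = (\<exists>U Z. open U \<and> V \<subseteq> U \<and> Cinf_on U Z \<and> (\<forall>p\<in>V. Z p = g p))"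

definition gc :: "quat \<Rightarrow> quat \<Rightarrow> real \<Rightarrow> quat" where
  "gc p v t = cos t *\<^sub>R p + sin t *\<^sub>R v"

definition tproj :: "quat \<Rightarrow> quat \<Rightarrow> quat" where
  "tproj p w = w - (w \<bullet> p) *\<^sub>R p"

definition saturated :: "quat set \<Rightarrow> (quat \<Rightarrow> quat) \<Rightarrow> bool" where
  "saturated V \<zeta> = (\<forall>p\<in>V. \<forall>t. gc p (\<zeta> p) t \<in> V)"

definition tangent_onb :: "quat \<Rightarrow> (nat \<Rightarrow> quat) \<Rightarrow> bool" where
  "tangent_onb p e = ((\<forall>i<3. norm (e i) = 1 \<and> e i \<bullet> p = 0) \<and>
      (\<forall>i<3. \<forall>j<3. i \<noteq> j \<longrightarrow> e i \<bullet> e j = 0))"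

text \<open>Hessian (\<nabla> df)(v,v) of f : S^3 \<supseteq> V \<rightarrow> S^2 at p: computed along the geodesic
  gc p v, the Levi-Civita connection of S^2 being the tangential projection of the
  ambient derivative.\<close>
definition map_hess :: "(quat \<Rightarrow> quat) \<Rightarrow> quat \<Rightarrow> quat \<Rightarrow> quat" where
  "map_hess f p v = tproj (f p)
     (vector_derivative (\<lambda>t. vector_derivative (\<lambda>s. f (gc p v s)) (at t)) (at 0))"

definition harmonic_map_on :: "quat set \<Rightarrow> (quat \<Rightarrow> quat) \<Rightarrow> bool" where
  "harmonic_map_on V f = (\<forall>p\<in>V. \<forall>e. tangent_onb p e \<longrightarrow> (\<Sum>i<3. map_hess f p (e i)) = 0)"

definition cov :: "(quat \<Rightarrow> quat) \<Rightarrow> quat \<Rightarrow> quat \<Rightarrow> quat" where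
  "cov \<zeta> p v = tproj p (vector_derivative (\<lambda>t. \<zeta> (gc p v t)) (at 0))"

text \<open>Second covariant derivative \<nabla>^2_{v,v} \<zeta> at p, computed along the geodesic gc p v
  (so the term \<nabla>_{\<nabla>_v v} vanishes).\<close>
definition cov2 :: "(quat \<Rightarrow> quat) \<Rightarrow> quat \<Rightarrow> quat \<Rightarrow> quat" where
  "cov2 \<zeta> p v = tproj p (vector_derivative
     (\<lambda>t. tproj (gc p v t) (vector_derivative (\<lambda>s. \<zeta> (gc p v s)) (at t))) (at 0))"

definition harmonic_unit_field_on :: "quat set \<Rightarrow> (quat \<Rightarrow> quat) \<Rightarrow> bool" where
  "harmonic_unit_field_on V \<zeta> = (\<forall>p\<in>V. \<forall>e. tangent_onb p e \<longrightarrow>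
      (\<Sum>i<3. cov2 \<zeta> p (e i)) + (\<Sum>i<3. (norm (cov \<zeta> p (e i)))\<^sup>2) *\<^sub>R \<zeta> p = 0)"

end

theory Submission
  imports Defs
begin

(* Put q = conj p * zeta p. As zeta is a unit tangent field, q is a unit imaginary quaternion,
  and on the great circle t -> cos t p + sin t zeta p the field equals the velocity
  -sin t p + cos t zeta p; conj(position) * velocity is constant along any great circle.

  For harmonicity fix p and an orthonormal frame e_1, e_2, e_3 of T_p S^3, and let L be the
  derivative of zeta at p and G_i the second derivative of zeta along the great circle in
  direction e_i. Differentiating |zeta| = 1 and zeta(x) . x = 0 along these circles constrains
  L and the G_i, and L zeta(p) = -p because the integral curves are great circles. Both the
  tension field of f and Delta zeta + |nabla zeta|^2 zeta are explicit in these data. Left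
  multiplication by conj p maps the second one to the first modulo span {1, q}: the only
  nontrivial cross term, sum_i conj(e_i) L e_i, lies in span {1, q} by the constraints on L.
  Both quantities are orthogonal to 1 and q, hence they coincide and vanish together. *)

section \<open>Quaternion algebra\<close>

lemma vector_4 [simp]:
  "(vector [a,b,c,d] :: 'a::zero^4) $ 1 = a"
  "(vector [a,b,c,d] :: 'a::zero^4) $ 2 = b"
  "(vector [a,b,c,d] :: 'a::zero^4) $ 3 = c"
  "(vector [a,b,c,d] :: 'a::zero^4) $ 4 = d"
  unfolding vector_def by simp_all

lemma inner_quat: "(x::quat) \<bullet> y = x$1*y$1 + x$2*y$2 + x$3*y$3 + x$4*y$4"
  by (simp add: inner_vec_def sum_4)

lemma power2_norm_quat: "(norm (x::quat))\<^sup>2 = (x$1)\<^sup>2 + (x$2)\<^sup>2 + (x$3)\<^sup>2 + (x$4)\<^sup>2"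
  unfolding power2_norm_eq_inner inner_quat by (simp add: power2_eq_square)

lemma quat_eq_iff: "(x::quat) = y \<longleftrightarrow> x$1 = y$1 \<and> x$2 = y$2 \<and> x$3 = y$3 \<and> x$4 = y$4"
  by (simp add: vec_eq_iff forall_4)

lemma qmul_nth [simp]:
  "qmul p q $ 1 = p$1*q$1 - p$2*q$2 - p$3*q$3 - p$4*q$4"
  "qmul p q $ 2 = p$1*q$2 + p$2*q$1 + p$3*q$4 - p$4*q$3"
  "qmul p q $ 3 = p$1*q$3 - p$2*q$4 + p$3*q$1 + p$4*q$2"
  "qmul p q $ 4 = p$1*q$4 + p$2*q$3 - p$3*q$2 + p$4*q$1"
  by (simp_all add: qmul_def)

lemma qconj_nth [simp]:
  "qconj p $ 1 = p$1" "qconj p $ 2 = - p$2" "qconj p $ 3 = - p$3" "qconj p $ 4 = - p$4"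
  by (simp_all add: qconj_def)

lemma bounded_bilinear_qmul: "bounded_bilinear qmul"
proof -
  have "bilinear qmul"
    unfolding bilinear_def by (intro conjI allI linearI) (simp_all add: quat_eq_iff algebra_simps)
  then show ?thesis by (simp add: bilinear_conv_bounded_bilinear)
qed

interpretation qmul: bounded_bilinear qmul
  by (rule bounded_bilinear_qmul)

lemmas qmul_linear_simps = qmul.add_left qmul.add_right qmul.diff_left qmul.diff_right
  qmul.scaleR_left qmul.scaleR_right qmul.minus_left qmul.minus_right qmul.zero_left qmul.zero_right

lemma linear_qconj: "linear qconj"
  by (intro linearI) (simp_all add: quat_eq_iff)

lemma bounded_linear_qconj: "bounded_linear qconj"
  using linear_qconj by (simp add: linear_conv_bounded_linear)

definition qone :: quat where "qone = vector [1, 0, 0, 0]"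

lemma qone_nth [simp]: "qone$1 = 1" "qone$2 = 0" "qone$3 = 0" "qone$4 = 0"
  by (simp_all add: qone_def)

lemma inner_qone [simp]: "x \<bullet> qone = x$1" "qone \<bullet> x = x$1"
  by (simp_all add: inner_quat)

lemma qmul_qone [simp]: "qmul a qone = a"
  by (simp add: quat_eq_iff)

lemma qmul_assoc: "qmul (qmul a b) c = qmul a (qmul b c)"
  by (simp add: quat_eq_iff algebra_simps)

lemma qconj_qmul: "qconj (qmul a b) = qmul (qconj b) (qconj a)"
  by (simp add: quat_eq_iff algebra_simps)

lemma qconj_imaginary: "x$1 = 0 \<Longrightarrow> qconj x = - x"
  by (simp add: quat_eq_iff)

lemma qmul_qconj_self: "qmul (qconj p) p = (p \<bullet> p) *\<^sub>R qone"
  by (simp add: quat_eq_iff inner_quat algebra_simps)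

lemma qmul_qmul_qconj: "qmul p (qmul (qconj p) x) = (p \<bullet> p) *\<^sub>R x"
  by (simp add: quat_eq_iff inner_quat algebra_simps)

lemma re_qmul_qconj: "(qmul (qconj a) b)$1 = a \<bullet> b"
  by (simp add: inner_quat)

lemma inner_qmul_qconj: "qmul (qconj a) b \<bullet> w = b \<bullet> qmul a w"
  by (simp add: inner_quat algebra_simps)

lemma inner_qmul_qmul: "qmul p x \<bullet> qmul p y = (p \<bullet> p) * (x \<bullet> y)"
  by (simp add: inner_quat algebra_simps)

lemma inner_qmul_qconj_qmul_qconj: "qmul (qconj p) x \<bullet> qmul (qconj p) y = (p \<bullet> p) * (x \<bullet> y)"
  by (simp add: inner_quat algebra_simps)

lemma norm_qmul: "norm (qmul a b) = norm a * norm b"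
proof -
  have "(norm (qmul a b))\<^sup>2 = (norm a * norm b)\<^sup>2"
    unfolding power_mult_distrib power2_norm_quat by (simp add: algebra_simps power2_eq_square)
  then show ?thesis by (simp add: power2_eq_iff_nonneg)
qed

lemma norm_qconj: "norm (qconj p) = norm p"
proof -
  have "(norm (qconj p))\<^sup>2 = (norm p)\<^sup>2" unfolding power2_norm_quat by simp
  then show ?thesis by (simp add: power2_eq_iff_nonneg)
qed

text \<open>For imaginary b, w we have qmul b w = -(b \<bullet> w) + b \<times> w, and the cross product of two
  vectors orthogonal to q is parallel to q.\<close>
lemma qmul_imaginary_orthogonal:
  assumes "b$1 = 0" "w$1 = 0" "q$1 = 0" "q \<bullet> q = 1" "b \<bullet> q = 0" "w \<bullet> q = 0"
  shows "qmul b w = (- (b \<bullet> w)) *\<^sub>R qone + (qmul b w \<bullet> q) *\<^sub>R q"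
  using assms unfolding quat_eq_iff inner_quat by simp algebra

definition qperp :: "quat \<Rightarrow> quat \<Rightarrow> quat" where
  "qperp q x = x - x$1 *\<^sub>R qone - (x \<bullet> q) *\<^sub>R q"

lemma linear_qperp: "linear (qperp q)"
  by (intro linearI) (simp_all add: qperp_def algebra_simps inner_add_left)

lemma linear_tproj: "linear (tproj q)"
  by (intro linearI) (simp_all add: tproj_def algebra_simps inner_add_left)

lemma power2_norm_tproj: "p \<bullet> p = 1 \<Longrightarrow> (norm (tproj p v))\<^sup>2 = v \<bullet> v - (v \<bullet> p)\<^sup>2"
  unfolding power2_norm_eq_inner tproj_def
  by (simp add: inner_diff_left inner_diff_right inner_commute power2_eq_square)

lemma tproj_eq_qperp: "x$1 = 0 \<Longrightarrow> tproj q x = qperp q x"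
  by (simp add: tproj_def qperp_def)

lemma qperp_eq_self: "x$1 = 0 \<Longrightarrow> x \<bullet> q = 0 \<Longrightarrow> qperp q x = x"
  by (simp add: qperp_def)

lemma qperp_qone: "q$1 = 0 \<Longrightarrow> qperp q qone = 0"
  by (simp add: qperp_def inner_commute)

context
  fixes q :: quat
  assumes q_re: "q$1 = 0" and q_unit: "q \<bullet> q = 1"
begin

lemma qperp_self: "qperp q q = 0"
  using q_re q_unit by (simp add: qperp_def)

lemma re_qperp: "(qperp q x)$1 = 0"
  using q_re by (simp add: qperp_def)

lemma inner_qperp: "qperp q x \<bullet> q = 0"
  using q_re q_unit by (simp add: qperp_def inner_diff_left)

lemma qperp_eq_0_if_inner: "x \<bullet> qperp q x = 0 \<Longrightarrow> qperp q x = 0"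
proof -
  assume "x \<bullet> qperp q x = 0"
  moreover have "qperp q x \<bullet> qperp q x = x \<bullet> qperp q x"
    using re_qperp[of x] inner_qperp[of x]
    by (simp add: qperp_def [of q x] inner_diff_left inner_commute)
  ultimately show ?thesis by simp
qed

end

lemma sum_lessThan_3: "(\<Sum>i<(3::nat). f i) = f 0 + f 1 + f 2"
  by (simp add: eval_nat_numeral)

lemma tangent_onb_expansion:
  assumes p_unit: "p \<bullet> p = 1" and onb: "tangent_onb p e" and xp: "x \<bullet> p = 0"
  shows "x = (\<Sum>i<3. (x \<bullet> e i) *\<^sub>R e i)"
proof -
  have n: "e i \<bullet> e i = 1" "e i \<bullet> p = 0" if "i<3" for i
    using onb that unfolding tangent_onb_def by (auto simp: power2_norm_eq_inner[symmetric])
  have o: "e i \<bullet> e j = 0" if "i<3" "j<3" "i \<noteq> j" for i j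
    using onb that unfolding tangent_onb_def by auto
  note facts = n[of 0] n[of 1] n[of 2] o[of 0 1] o[of 0 2] o[of 1 2] o[of 1 0] o[of 2 0] o[of 2 1]
  define B where "B = {p, e 0, e 1, e 2}"
  have "p \<noteq> e 0" "p \<noteq> e 1" "p \<noteq> e 2" "e 0 \<noteq> e 1" "e 0 \<noteq> e 2" "e 1 \<noteq> e 2"
    using n[of 0] n[of 1] n[of 2] o[of 0 1] o[of 0 2] o[of 1 2] p_unit by (auto simp: inner_commute)
  then have "card B = 4" unfolding B_def by simp
  moreover have "independent B"
  proof (rule pairwise_orthogonal_independent)
    show "pairwise orthogonal B"
      unfolding B_def pairwise_def orthogonal_def using facts by (auto simp: inner_commute)
    show "0 \<notin> B" unfolding B_def using facts p_unit by auto
  qed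
  ultimately have "dim B = DIM(quat)"
    by (simp add: dim_eq_card_independent)
  then have "span B = UNIV" using dim_eq_full by blast
  define y where "y = x - (\<Sum>i<3. (x \<bullet> e i) *\<^sub>R e i)"
  have "orthogonal y b" if "b \<in> B" for b
    using that xp facts unfolding y_def B_def orthogonal_def
    by (auto simp: inner_diff_left inner_add_left sum_lessThan_3)
  then have "orthogonal y y"
    using orthogonal_to_span[of y B y] \<open>span B = UNIV\<close> by simp
  then show ?thesis unfolding y_def orthogonal_def by simp
qed

section \<open>Great circles\<close>

lemma gc_0 [simp]: "gc p e 0 = p"
  unfolding gc_def by simp

lemma has_vector_derivative_gc: "(gc p e has_vector_derivative (- sin t *\<^sub>R p + cos t *\<^sub>R e)) (at t)"
  unfolding gc_def by (auto intro!: derivative_eq_intros)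

lemma has_vector_derivative_gc_velocity:
  "((\<lambda>t. - sin t *\<^sub>R p + cos t *\<^sub>R e) has_vector_derivative (- gc p e t)) (at t)"
  unfolding gc_def by (auto intro!: derivative_eq_intros simp: algebra_simps)

lemma continuous_gc: "continuous (at t) (gc p e)"
  using has_vector_derivative_gc differentiableI_vector differentiable_imp_continuous_within by blast

lemma gc_in_S3:
  assumes "p \<bullet> p = 1" "e \<bullet> e = 1" "e \<bullet> p = 0"
  shows "gc p e t \<in> S3"
proof -
  have "gc p e t \<bullet> gc p e t = (cos t)\<^sup>2 + (sin t)\<^sup>2"
    using assms unfolding gc_def
    by (simp add: inner_add_left inner_add_right inner_commute power2_eq_square)
  then show ?thesis unfolding S3_def by (simp add: norm_eq_1)
qed

lemma qmul_qconj_in_S2: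
  assumes "norm p = 1" "norm z = 1" "z \<bullet> p = 0"
  shows "qmul (qconj p) z \<in> S2"
  using assms unfolding S2_def
  by (simp add: norm_qmul norm_qconj re_qmul_qconj[unfolded inner_quat] inner_quat algebra_simps)

lemma field_along_great_circle:
  assumes "\<forall>t. (gc p z has_vector_derivative \<zeta> (gc p z t)) (at t)"
  shows "\<zeta> (gc p z t) = - sin t *\<^sub>R p + cos t *\<^sub>R z"
  using assms has_vector_derivative_gc vector_derivative_unique_at by blast

lemma qmul_qconj_gc_velocity:
  assumes p_unit: "p \<bullet> p = 1" and z_unit: "z \<bullet> z = 1" and zp: "z \<bullet> p = 0"
  shows "qmul (qconj (gc p z t)) (- sin t *\<^sub>R p + cos t *\<^sub>R z) = qmul (qconj p) z"
proof -
  define q where "q = qmul (qconj p) z"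
  have "qmul (qconj z) p = qconj q"
    unfolding q_def qconj_qmul using linear_qconj by (simp add: quat_eq_iff)
  also have "\<dots> = - q"
    by (rule qconj_imaginary) (use zp in \<open>simp add: q_def re_qmul_qconj[unfolded inner_quat] inner_quat algebra_simps\<close>)
  finally have zp_q: "qmul (qconj z) p = - q" .
  have "qconj (gc p z t) = cos t *\<^sub>R qconj p + sin t *\<^sub>R qconj z"
    unfolding gc_def using linear_qconj by (simp add: linear_add linear_scale)
  then have "qmul (qconj (gc p z t)) (- sin t *\<^sub>R p + cos t *\<^sub>R z)
      = (cos t * cos t) *\<^sub>R q + (sin t * sin t) *\<^sub>R q"
    using qmul_qconj_self[of p] qmul_qconj_self[of z] p_unit z_unit zp_q
    by (simp add: qmul_linear_simps q_def[symmetric] algebra_simps)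
  also have "\<dots> = ((cos t)\<^sup>2 + (sin t)\<^sup>2) *\<^sub>R q"
    by (simp only: scaleR_add_left power2_eq_square)
  finally show ?thesis by (simp add: q_def)
qed

lemma has_vector_derivative_locally_constant:
  assumes "(f has_vector_derivative D) (at t)" "open S" "t \<in> S" "\<And>s. s \<in> S \<Longrightarrow> f s = c"
  shows "D = 0"
proof -
  have "(f has_vector_derivative 0) (at t)"
    by (rule has_vector_derivative_transform_within_open[OF _ assms(2,3)]) (use assms(4) in simp_all)
  then show ?thesis using assms(1) vector_derivative_unique_at by blast
qed

lemma locally_constant_derivatives_vanish:
  assumes "open S" "t \<in> S" "\<And>s. s \<in> S \<Longrightarrow> f s = c"
    and "\<And>s. s \<in> S \<Longrightarrow> (f has_vector_derivative f' s) (at s)"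
    and "(f' has_vector_derivative D) (at t)"
  shows "f' t = 0" "D = 0"
proof -
  have f'_0: "f' s = 0" if "s \<in> S" for s
    by (rule has_vector_derivative_locally_constant[OF assms(4)[OF that] assms(1) that assms(3)])
  then show "f' t = 0" using assms(2) by blast
  show "D = 0" by (rule has_vector_derivative_locally_constant[OF assms(5,1,2) f'_0])
qed


section \<open>Derivatives of a unit vector field along great circles\<close>

definition gc_accel :: "(quat \<Rightarrow> quat) \<Rightarrow> quat \<Rightarrow> quat \<Rightarrow> quat" where
  "gc_accel \<zeta> p v = vector_derivative (\<lambda>t. vector_derivative (\<lambda>s. \<zeta> (gc p v s)) (at t)) (at 0)"

locale smooth_unit_field =
  fixes V U W :: "quat set" and \<zeta> Z :: "quat \<Rightarrow> quat"
  assumes open_U: "open U" and V_subset_U: "V \<subseteq> U" and C2_Z: "Ck 2 U Z"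
    and Z_eq: "\<And>p. p \<in> V \<Longrightarrow> Z p = \<zeta> p"
    and open_W: "open W" and V_eq: "V = S3 \<inter> W"
    and unit_tangent: "\<And>p. p \<in> V \<Longrightarrow> norm (\<zeta> p) = 1 \<and> \<zeta> p \<bullet> p = 0"
begin

definition DZ :: "quat \<Rightarrow> quat \<Rightarrow> quat" where
  "DZ x = frechet_derivative Z (at x)"

lemma has_derivative_DZ: "x \<in> U \<Longrightarrow> (Z has_derivative DZ x) (at x)"
  using C2_Z open_U differentiable_on_eq_differentiable_at frechet_derivative_works
  by (fastforce simp: numeral_2_eq_2 DZ_def)

lemma linear_DZ: "x \<in> U \<Longrightarrow> linear (DZ x)"
  using has_derivative_DZ has_derivative_linear by blast

lemma differentiable_DZ: "x \<in> U \<Longrightarrow> (\<lambda>y. DZ y v) differentiable (at x)"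
  using C2_Z open_U differentiable_on_eq_differentiable_at
  by (fastforce simp: numeral_2_eq_2 DZ_def)

lemma unit_sphere_V: "p \<in> V \<Longrightarrow> p \<bullet> p = 1"
  using V_eq by (auto simp: S3_def dot_square_norm)

lemma unit_tangent_inner: "p \<in> V \<Longrightarrow> \<zeta> p \<bullet> \<zeta> p = 1 \<and> \<zeta> p \<bullet> p = 0"
  using unit_tangent by (auto simp: dot_square_norm)

end

locale great_circle_in_field = smooth_unit_field +
  fixes p e :: quat
  assumes p_in_V: "p \<in> V" and e_unit: "e \<bullet> e = 1" and e_tangent: "e \<bullet> p = 0"
begin

definition velocity :: "real \<Rightarrow> quat" where
  "velocity t = - sin t *\<^sub>R p + cos t *\<^sub>R e"

definition I :: "real set" where
  "I = gc p e -` (W \<inter> U)"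

definition field_deriv :: "real \<Rightarrow> quat" where
  "field_deriv t = DZ (gc p e t) (velocity t)"

lemma has_vector_derivative_gc': "(gc p e has_vector_derivative velocity t) (at t)"
  unfolding velocity_def by (rule has_vector_derivative_gc)

lemma has_vector_derivative_velocity: "(velocity has_vector_derivative - gc p e t) (at t)"
  unfolding velocity_def by (rule has_vector_derivative_gc_velocity)

lemma velocity_0 [simp]: "velocity 0 = e"
  by (simp add: velocity_def)

lemma open_I: "open I"
  unfolding I_def by (rule continuous_open_vimage) (use open_W open_U continuous_gc in auto)

lemma zero_in_I: "0 \<in> I"
  using p_in_V V_subset_U V_eq by (auto simp: I_def)

lemma gc_in_V: "t \<in> I \<Longrightarrow> gc p e t \<in> V"
  using gc_in_S3[OF unit_sphere_V[OF p_in_V] e_unit e_tangent] V_eq by (auto simp: I_def)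

lemma gc_in_U: "t \<in> I \<Longrightarrow> gc p e t \<in> U"
  by (simp add: I_def)

lemma has_vector_derivative_field:
  assumes "t \<in> I"
  shows "((\<lambda>s. \<zeta> (gc p e s)) has_vector_derivative field_deriv t) (at t)"
proof -
  have "((Z \<circ> gc p e) has_vector_derivative field_deriv t) (at t within UNIV)"
    unfolding field_deriv_def
    by (rule vector_derivative_diff_chain_within[OF has_vector_derivative_gc'])
       (rule has_derivative_at_withinI[OF has_derivative_DZ[OF gc_in_U[OF assms]]])
  then show ?thesis
    by (rule has_vector_derivative_transform_within_open[OF _ open_I assms])
       (use gc_in_V Z_eq in auto)
qed

lemma vector_derivative_field: "t \<in> I \<Longrightarrow> vector_derivative (\<lambda>s. \<zeta> (gc p e s)) (at t) = field_deriv t"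
  using has_vector_derivative_field vector_derivative_at by blast

lemma field_deriv_0 [simp]: "field_deriv 0 = DZ p e"
  by (simp add: field_deriv_def)

text \<open>In coordinates, field_deriv is near 0 a sum of products of differentiable functions; this is
  where Z is needed to be C^2.\<close>
lemma has_vector_derivative_field_deriv: "(field_deriv has_vector_derivative gc_accel \<zeta> p e) (at 0)"
proof -
  define d where "d t = (\<Sum>b\<in>Basis. (velocity t \<bullet> b) *\<^sub>R DZ (gc p e t) b)" for t
  have field_deriv_eq: "field_deriv t = d t" if "t \<in> I" for t
  proof -
    have "field_deriv t = DZ (gc p e t) (\<Sum>b\<in>Basis. (velocity t \<bullet> b) *\<^sub>R b)"
      unfolding field_deriv_def by (simp add: euclidean_representation)
    then show ?thesis
      unfolding d_def using linear_DZ[OF gc_in_U[OF that]] by (simp add: linear_sum linear_scale)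
  qed
  have "d differentiable (at 0)"
    unfolding d_def
  proof (intro differentiable_sum ballI differentiable_scaleR)
    fix b :: quat
    show "(\<lambda>t. velocity t \<bullet> b) differentiable at 0"
      using has_vector_derivative_velocity differentiableI_vector by (intro differentiable_inner) auto
    show "(\<lambda>t. DZ (gc p e t) b) differentiable at 0"
      by (rule differentiable_compose[where f="\<lambda>x. DZ x b" and g="gc p e"])
         (use differentiable_DZ p_in_V V_subset_U differentiableI_vector[OF has_vector_derivative_gc'] in auto)
  qed simp
  then obtain A where "(d has_vector_derivative A) (at 0)"
    using vector_derivative_works by blast
  then have field_deriv_A: "(field_deriv has_vector_derivative A) (at 0)"
    by (rule has_vector_derivative_transform_within_open[OF _ open_I zero_in_I]) (use field_deriv_eq in auto)
  then have "((\<lambda>t. vector_derivative (\<lambda>s. \<zeta> (gc p e s)) (at t)) has_vector_derivative A) (at 0)"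
    by (rule has_vector_derivative_transform_within_open[OF _ open_I zero_in_I])
       (use vector_derivative_field in auto)
  then have "A = gc_accel \<zeta> p e"
    unfolding gc_accel_def using vector_derivative_at by metis
  then show ?thesis using field_deriv_A by simp
qed

lemma has_vector_derivative_speed:
  "((\<lambda>t. vector_derivative (\<lambda>s. \<zeta> (gc p e s)) (at t)) has_vector_derivative gc_accel \<zeta> p e) (at 0)"
  by (rule has_vector_derivative_transform_within_open[OF has_vector_derivative_field_deriv open_I zero_in_I])
     (use vector_derivative_field in auto)

lemma cov_eq: "cov \<zeta> p e = tproj p (DZ p e)"
  unfolding cov_def using vector_derivative_field[OF zero_in_I] by simp

lemma cov2_eq:
  defines "A \<equiv> gc_accel \<zeta> p e" and "L \<equiv> DZ p e"
  shows "cov2 \<zeta> p e = tproj p (A - (A \<bullet> p + L \<bullet> e) *\<^sub>R p - (L \<bullet> p) *\<^sub>R e)"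
proof -
  let ?T = "\<lambda>t. vector_derivative (\<lambda>s. \<zeta> (gc p e s)) (at t)"
  have T0: "?T 0 = L" unfolding L_def using vector_derivative_field[OF zero_in_I] by simp
  have "((\<lambda>t. ?T t \<bullet> gc p e t) has_vector_derivative L \<bullet> e + A \<bullet> p) (at 0)"
    using bounded_bilinear.has_vector_derivative[OF bounded_bilinear_inner
        has_vector_derivative_speed has_vector_derivative_gc'] T0
    unfolding A_def by simp
  from bounded_bilinear.has_vector_derivative[OF bounded_bilinear_scaleR this has_vector_derivative_gc']
  have "((\<lambda>t. (?T t \<bullet> gc p e t) *\<^sub>R gc p e t) has_vector_derivative
      (L \<bullet> p) *\<^sub>R e + (L \<bullet> e + A \<bullet> p) *\<^sub>R p) (at 0)"
    using T0 by simp
  from has_vector_derivative_diff[OF has_vector_derivative_speed this]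
  have "((\<lambda>t. tproj (gc p e t) (?T t)) has_vector_derivative
      A - (A \<bullet> p + L \<bullet> e) *\<^sub>R p - (L \<bullet> p) *\<^sub>R e) (at 0)"
    unfolding tproj_def A_def by (simp add: algebra_simps)
  from vector_derivative_at[OF this] show ?thesis
    unfolding cov2_def by simp
qed

lemma map_hess_eq:
  shows "map_hess (\<lambda>p. qmul (qconj p) (\<zeta> p)) p e = tproj (qmul (qconj p) (\<zeta> p))
    (qmul (qconj p) (gc_accel \<zeta> p e) + 2 *\<^sub>R qmul (qconj e) (DZ p e) - qmul (qconj p) (\<zeta> p))"
proof -
  define F where "F t = qmul (qconj (gc p e t)) (field_deriv t) + qmul (qconj (velocity t)) (\<zeta> (gc p e t))" for t
  have conj_gc: "((\<lambda>t. qconj (gc p e t)) has_vector_derivative qconj (velocity t)) (at t)" for t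
    by (rule bounded_linear.has_vector_derivative[OF bounded_linear_qconj has_vector_derivative_gc'])
  have conj_velocity: "((\<lambda>t. qconj (velocity t)) has_vector_derivative - qconj (gc p e t)) (at t)" for t
    using bounded_linear.has_vector_derivative[OF bounded_linear_qconj has_vector_derivative_velocity]
    by (simp add: linear_neg[OF linear_qconj])
  have F: "((\<lambda>s. qmul (qconj (gc p e s)) (\<zeta> (gc p e s))) has_vector_derivative F t) (at t)"
    if "t \<in> I" for t
    using qmul.has_vector_derivative[OF conj_gc has_vector_derivative_field[OF that]]
    unfolding F_def by (simp add: add.commute)
  have "(F has_vector_derivative
      (qmul (qconj p) (gc_accel \<zeta> p e) + qmul (qconj e) (DZ p e)) + (qmul (qconj e) (DZ p e) - qmul (qconj p) (\<zeta> p))) (at 0)"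
    unfolding F_def
    using has_vector_derivative_add[OF qmul.has_vector_derivative[OF conj_gc has_vector_derivative_field_deriv]
        qmul.has_vector_derivative[OF conj_velocity has_vector_derivative_field[OF zero_in_I]]]
    by (simp add: qmul_linear_simps)
  then have "(F has_vector_derivative
      qmul (qconj p) (gc_accel \<zeta> p e) + 2 *\<^sub>R qmul (qconj e) (DZ p e) - qmul (qconj p) (\<zeta> p)) (at 0)"
    by (simp add: scaleR_2 algebra_simps)
  then have "((\<lambda>t. vector_derivative (\<lambda>s. qmul (qconj (gc p e s)) (\<zeta> (gc p e s))) (at t)) has_vector_derivative
      qmul (qconj p) (gc_accel \<zeta> p e) + 2 *\<^sub>R qmul (qconj e) (DZ p e) - qmul (qconj p) (\<zeta> p)) (at 0)"
    by (rule has_vector_derivative_transform_within_open[OF _ open_I zero_in_I])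
       (metis F vector_derivative_at)
  from vector_derivative_at[OF this] show ?thesis
    unfolding map_hess_def by simp
qed

text \<open>Differentiating \<zeta> \<bullet> x = 0 along the great circle.\<close>
lemma tangency_constraints:
  "DZ p e \<bullet> p = - (\<zeta> p \<bullet> e)" "gc_accel \<zeta> p e \<bullet> p + 2 * (DZ p e \<bullet> e) = 0"
proof -
  let ?g = "\<lambda>t. \<zeta> (gc p e t)"
  have const: "\<And>s. s \<in> I \<Longrightarrow> ?g s \<bullet> gc p e s = 0"
    using gc_in_V unit_tangent by auto
  have deriv: "\<And>s. s \<in> I \<Longrightarrow>
      ((\<lambda>t. ?g t \<bullet> gc p e t) has_vector_derivative ?g s \<bullet> velocity s + field_deriv s \<bullet> gc p e s) (at s)"
    using bounded_bilinear.has_vector_derivative[OF bounded_bilinear_inner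
        has_vector_derivative_field has_vector_derivative_gc'] .
  have deriv2: "((\<lambda>t. ?g t \<bullet> velocity t + field_deriv t \<bullet> gc p e t) has_vector_derivative
      (\<zeta> p \<bullet> - p + DZ p e \<bullet> e) + (DZ p e \<bullet> e + gc_accel \<zeta> p e \<bullet> p)) (at 0)"
    using has_vector_derivative_add[OF
        bounded_bilinear.has_vector_derivative[OF bounded_bilinear_inner
          has_vector_derivative_field[OF zero_in_I] has_vector_derivative_velocity]
        bounded_bilinear.has_vector_derivative[OF bounded_bilinear_inner
          has_vector_derivative_field_deriv has_vector_derivative_gc']]
    by simp
  note vanish = locally_constant_derivatives_vanish[OF open_I zero_in_I const deriv deriv2]
  show "DZ p e \<bullet> p = - (\<zeta> p \<bullet> e)" "gc_accel \<zeta> p e \<bullet> p + 2 * (DZ p e \<bullet> e) = 0"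
    using vanish unit_tangent_inner[OF p_in_V] by (simp_all add: inner_commute)
qed

text \<open>Differentiating \<zeta> \<bullet> \<zeta> = 1 along the great circle.\<close>
lemma unit_length_constraints:
  "DZ p e \<bullet> \<zeta> p = 0" "DZ p e \<bullet> DZ p e + \<zeta> p \<bullet> gc_accel \<zeta> p e = 0"
proof -
  let ?g = "\<lambda>t. \<zeta> (gc p e t)"
  have const: "\<And>s. s \<in> I \<Longrightarrow> ?g s \<bullet> ?g s = 1"
    using gc_in_V unit_tangent_inner by auto
  have deriv: "\<And>s. s \<in> I \<Longrightarrow>
      ((\<lambda>t. ?g t \<bullet> ?g t) has_vector_derivative ?g s \<bullet> field_deriv s + field_deriv s \<bullet> ?g s) (at s)"
    using bounded_bilinear.has_vector_derivative[OF bounded_bilinear_inner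
        has_vector_derivative_field has_vector_derivative_field] .
  have deriv2: "((\<lambda>t. ?g t \<bullet> field_deriv t + field_deriv t \<bullet> ?g t) has_vector_derivative
      (\<zeta> p \<bullet> gc_accel \<zeta> p e + DZ p e \<bullet> DZ p e) + (DZ p e \<bullet> DZ p e + gc_accel \<zeta> p e \<bullet> \<zeta> p)) (at 0)"
    using has_vector_derivative_add[OF
        bounded_bilinear.has_vector_derivative[OF bounded_bilinear_inner
          has_vector_derivative_field[OF zero_in_I] has_vector_derivative_field_deriv]
        bounded_bilinear.has_vector_derivative[OF bounded_bilinear_inner
          has_vector_derivative_field_deriv has_vector_derivative_field[OF zero_in_I]]]
    by simp
  note vanish = locally_constant_derivatives_vanish[OF open_I zero_in_I const deriv deriv2]
  show "DZ p e \<bullet> \<zeta> p = 0" "DZ p e \<bullet> DZ p e + \<zeta> p \<bullet> gc_accel \<zeta> p e = 0"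
    using vanish by (simp_all add: inner_commute)
qed

end

context smooth_unit_field
begin

lemma DZ_tangent:
  assumes "p \<in> V" "v \<bullet> p = 0"
  shows "DZ p v \<bullet> \<zeta> p = 0" "DZ p v \<bullet> p = - (\<zeta> p \<bullet> v)"
proof -
  have lin: "linear (DZ p)" using assms(1) V_subset_U linear_DZ by blast
  have "DZ p v \<bullet> \<zeta> p = 0 \<and> DZ p v \<bullet> p = - (\<zeta> p \<bullet> v)"
  proof (cases "v = 0")
    case True
    then show ?thesis using lin by (simp add: linear_0)
  next
    case False
    define u where "u = (1 / norm v) *\<^sub>R v"
    interpret great_circle_in_field V U W \<zeta> Z p u
      by unfold_locales (use assms False in \<open>auto simp: u_def dot_square_norm\<close>)
    have "v = norm v *\<^sub>R u" unfolding u_def using False by simp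
    then have "DZ p v = norm v *\<^sub>R DZ p u" "\<zeta> p \<bullet> v = norm v * (\<zeta> p \<bullet> u)"
      using lin by (metis linear_scale, metis inner_scaleR_right)
    then show ?thesis using tangency_constraints(1) unit_length_constraints(1) by simp
  qed
  then show "DZ p v \<bullet> \<zeta> p = 0" "DZ p v \<bullet> p = - (\<zeta> p \<bullet> v)" by auto
qed

lemma DZ_field:
  assumes "p \<in> V" and "\<forall>t. (gc p (\<zeta> p) has_vector_derivative \<zeta> (gc p (\<zeta> p) t)) (at t)"
  shows "DZ p (\<zeta> p) = - p"
proof -
  interpret great_circle_in_field V U W \<zeta> Z p "\<zeta> p"
    by unfold_locales (use assms unit_tangent_inner in auto)
  have "vector_derivative (\<lambda>s. - sin s *\<^sub>R p + cos s *\<^sub>R \<zeta> p) (at 0) = DZ p (\<zeta> p)"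
    using vector_derivative_field[OF zero_in_I] field_along_great_circle[OF assms(2)] by simp
  moreover have "vector_derivative (\<lambda>s. - sin s *\<^sub>R p + cos s *\<^sub>R \<zeta> p) (at 0) = - p"
    using vector_derivative_at[OF has_vector_derivative_gc_velocity[of p "\<zeta> p" 0]] by simp
  ultimately show ?thesis by simp
qed

end


section \<open>The pointwise algebra\<close>

text \<open>The first-order data of a unit tangent field at p whose integral curve through p is the
  great circle in direction z = \<zeta> p: L is the derivative of \<zeta> at p.\<close>
locale unit_field_jet =
  fixes p z :: quat and L :: "quat \<Rightarrow> quat"
  assumes p_unit: "p \<bullet> p = 1" and z_unit: "z \<bullet> z = 1" and z_tangent: "z \<bullet> p = 0"
    and linear_L: "linear L"
    and L_tangent_z: "\<And>v. v \<bullet> p = 0 \<Longrightarrow> L v \<bullet> z = 0"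
    and L_tangent_p: "\<And>v. v \<bullet> p = 0 \<Longrightarrow> L v \<bullet> p = - (z \<bullet> v)"
    and L_z: "L z = - p"
begin

definition q :: quat where "q = qmul (qconj p) z"

lemma q_re: "q$1 = 0"
  unfolding q_def re_qmul_qconj using z_tangent by (simp add: inner_commute)

lemma q_unit: "q \<bullet> q = 1"
  unfolding q_def inner_qmul_qconj_qmul_qconj using p_unit z_unit by simp

lemma qmul_p_q: "qmul p q = z"
  unfolding q_def by (simp add: qmul_qmul_qconj p_unit)

text \<open>Write a = p b with b imaginary and orthogonal to q; then a w lies in span {p, z}.\<close>
lemma inner_L_qmul:
  assumes ap: "a \<bullet> p = 0" and az: "a \<bullet> z = 0" and w_re: "w$1 = 0" and wq: "w \<bullet> q = 0"
  shows "L a \<bullet> qmul a w = 0"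
proof -
  define b where "b = qmul (qconj p) a"
  have a_eq: "a = qmul p b" unfolding b_def by (simp add: qmul_qmul_qconj p_unit)
  have b_re: "b$1 = 0" unfolding b_def re_qmul_qconj using ap by (simp add: inner_commute)
  have bq: "b \<bullet> q = 0" unfolding b_def q_def inner_qmul_qconj_qmul_qconj using p_unit az by simp
  have "qmul a w = (- (b \<bullet> w)) *\<^sub>R p + (qmul b w \<bullet> q) *\<^sub>R z"
    by (subst a_eq, subst qmul_assoc, subst qmul_imaginary_orthogonal[OF b_re w_re q_re q_unit bq wq])
       (simp add: qmul_linear_simps qmul_p_q)
  moreover have "L a \<bullet> z = 0" "L a \<bullet> p = 0"
    using L_tangent_z[OF ap] L_tangent_p[OF ap] az by (simp_all add: inner_commute)
  ultimately show ?thesis by (simp add: inner_diff_right)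
qed

lemma inner_p_qmul_z:
  assumes "w$1 = 0" "w \<bullet> q = 0"
  shows "p \<bullet> qmul z w = 0"
proof -
  have "qmul p (qmul q w) = qmul z w"
    by (simp only: qmul_assoc[symmetric] qmul_p_q)
  then have "p \<bullet> qmul z w = qmul p qone \<bullet> qmul p (qmul q w)"
    by simp
  also have "\<dots> = (qmul q w)$1" unfolding inner_qmul_qmul p_unit by simp
  also have "\<dots> = 0" using assms q_re by (simp add: inner_quat algebra_simps)
  finally show ?thesis .
qed

end

text \<open>The second-order data along an orthonormal tangent frame e: G i is the second derivative
  of \<zeta> along the great circle in direction e i.\<close>
locale framed_unit_field_jet = unit_field_jet +
  fixes e G :: "nat \<Rightarrow> quat"
  assumes onb: "tangent_onb p e"
    and G_p: "\<And>i. i < 3 \<Longrightarrow> G i \<bullet> p + 2 * (L (e i) \<bullet> e i) = 0"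
    and G_z: "\<And>i. i < 3 \<Longrightarrow> L (e i) \<bullet> L (e i) + z \<bullet> G i = 0"
begin

lemma e_tangent: "i < 3 \<Longrightarrow> e i \<bullet> p = 0"
  using onb unfolding tangent_onb_def by auto

lemma z_expansion: "z = (\<Sum>i<3. (z \<bullet> e i) *\<^sub>R e i)"
  by (rule tangent_onb_expansion[OF p_unit onb z_tangent])

lemma L_e_p: "i < 3 \<Longrightarrow> L (e i) \<bullet> p = - (z \<bullet> e i)"
  using L_tangent_p e_tangent by blast

definition K :: quat where
  "K = (\<Sum>i<3. qmul (qconj (e i)) (L (e i)))"

text \<open>Split e i = a i + (z \<bullet> e i) z with a i orthogonal to p and z.\<close>
lemma inner_K:
  assumes w_re: "w$1 = 0" and wq: "w \<bullet> q = 0"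
  shows "K \<bullet> w = 0"
proof -
  define c where "c i = z \<bullet> e i" for i
  define a where "a i = e i - c i *\<^sub>R z" for i
  have ap: "a i \<bullet> p = 0" if "i < 3" for i
    unfolding a_def using e_tangent[OF that] z_tangent by (simp add: inner_diff_left)
  have az: "a i \<bullet> z = 0" for i
    unfolding a_def c_def using z_unit by (simp add: inner_diff_left inner_commute[of "e i" z])
  have L_e: "L (e i) = L (a i) - c i *\<^sub>R p" for i
  proof -
    have "L (e i) = L (a i) + c i *\<^sub>R L z"
      unfolding a_def using linear_L by (simp add: linear_diff linear_scale)
    then show ?thesis using L_z by simp
  qed
  have term_i: "qmul (qconj (e i)) (L (e i)) \<bullet> w
      = L (a i) \<bullet> qmul (a i) w + c i * (L (a i) \<bullet> qmul z w) - c i * (p \<bullet> qmul (e i) w)" for i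
  proof -
    have "qmul (e i) w = qmul (a i) w + c i *\<^sub>R qmul z w"
      unfolding a_def by (simp add: qmul_linear_simps)
    then show ?thesis
      unfolding inner_qmul_qconj L_e by (simp add: inner_diff_left inner_add_right algebra_simps)
  qed
  have sum_c_e: "(\<Sum>i<3. c i *\<^sub>R e i) = z"
    using z_expansion unfolding c_def by simp
  have "z \<bullet> z = (\<Sum>i<3. c i * c i)"
    by (subst (2) z_expansion) (simp add: inner_sum_right c_def)
  moreover have "(\<Sum>i<3. c i *\<^sub>R a i) = (\<Sum>i<3. c i *\<^sub>R e i) - (\<Sum>i<3. c i * c i) *\<^sub>R z"
    unfolding a_def by (simp add: scaleR_diff_right sum_subtractf scaleR_sum_left)
  ultimately have sum_c_a: "(\<Sum>i<3. c i *\<^sub>R a i) = 0"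
    using sum_c_e z_unit by simp
  have "(\<Sum>i<3. L (a i) \<bullet> qmul (a i) w) = 0"
    using inner_L_qmul[OF ap az w_re wq] by simp
  moreover have "(\<Sum>i<3. c i * (L (a i) \<bullet> qmul z w)) = L (\<Sum>i<3. c i *\<^sub>R a i) \<bullet> qmul z w"
    by (simp add: linear_sum[OF linear_L] linear_scale[OF linear_L] inner_sum_left)
  moreover have "(\<Sum>i<3. c i * (p \<bullet> qmul (e i) w)) = p \<bullet> qmul (\<Sum>i<3. c i *\<^sub>R e i) w"
    by (simp add: qmul.sum_left qmul.scaleR_left inner_sum_right)
  ultimately show ?thesis
    unfolding K_def inner_sum_left term_i sum_c_a sum_c_e
    using inner_p_qmul_z[OF w_re wq] linear_0[OF linear_L]
    by (simp add: sum_subtractf sum.distrib sum_distrib_left)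
qed

lemma qperp_K: "qperp q K = 0"
  using inner_K[OF re_qperp[OF q_re q_unit] inner_qperp[OF q_re q_unit]]
  by (rule qperp_eq_0_if_inner[OF q_re q_unit])

text \<open>tproj q (F i) is the Hessian of f = conj p \<zeta> at p in direction e i (see map_hess_eq), and
  H is \<Delta>\<zeta> + |\<nabla>\<zeta>|^2 \<zeta> at p (see cov2_eq, cov_eq).\<close>
definition F :: "nat \<Rightarrow> quat" where
  "F i = qmul (qconj p) (G i) + 2 *\<^sub>R qmul (qconj (e i)) (L (e i)) - q"

definition H :: quat where
  "H = (\<Sum>i<3. tproj p (G i - (G i \<bullet> p + L (e i) \<bullet> e i) *\<^sub>R p - (L (e i) \<bullet> p) *\<^sub>R e i))
     + (\<Sum>i<3. (norm (tproj p (L (e i))))\<^sup>2) *\<^sub>R z"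

lemma re_sum_F: "(\<Sum>i<3. F i)$1 = 0"
proof -
  have "(F i)$1 = 0" if "i < 3" for i
    using G_p[OF that] q_re unfolding F_def
    by (simp add: re_qmul_qconj[unfolded inner_quat] inner_quat algebra_simps)
  then show ?thesis by (simp add: sum_lessThan_3)
qed

lemma H_orthogonal_p: "H \<bullet> p = 0"
  unfolding H_def using z_tangent p_unit
  by (simp add: inner_add_left inner_sum_left tproj_def inner_diff_left)

lemma H_orthogonal_z: "H \<bullet> z = 0"
proof -
  have tproj_z: "tproj p (G i - (G i \<bullet> p + L (e i) \<bullet> e i) *\<^sub>R p - (L (e i) \<bullet> p) *\<^sub>R e i) \<bullet> z
      = G i \<bullet> z + (z \<bullet> e i)\<^sup>2" if "i < 3" for i
    using z_tangent inner_commute[of p z] inner_commute[of "e i" z] L_e_p[OF that]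
    by (simp add: tproj_def inner_diff_left inner_add_left power2_eq_square)
  have norm_tproj: "(norm (tproj p (L (e i))))\<^sup>2 = L (e i) \<bullet> L (e i) - (z \<bullet> e i)\<^sup>2" if "i < 3" for i
    using power2_norm_tproj[OF p_unit] L_e_p[OF that] by simp
  have "H \<bullet> z = (\<Sum>i<3. G i \<bullet> z + (z \<bullet> e i)\<^sup>2) + (\<Sum>i<3. L (e i) \<bullet> L (e i) - (z \<bullet> e i)\<^sup>2)"
    unfolding H_def using z_unit tproj_z norm_tproj by (simp add: inner_add_left inner_sum_left)
  also have "\<dots> = (\<Sum>i<3. L (e i) \<bullet> L (e i) + z \<bullet> G i)"
    by (simp add: sum_lessThan_3 inner_commute)
  also have "\<dots> = 0"
    using G_z by simp
  finally show ?thesis .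
qed

text \<open>Multiplying the field term by conj p turns the projections tproj p into subtractions of
  multiples of qone; what is left differs from the sum of the F i by multiples of qone and q
  and by 2 K.\<close>
lemma qperp_qconj_H: "qperp q (qmul (qconj p) H) = qperp q (\<Sum>i<3. F i)"
proof -
  note qperp_lin = linear_sum[OF linear_qperp] linear_diff[OF linear_qperp]
    linear_add[OF linear_qperp] linear_scale[OF linear_qperp] linear_neg[OF linear_qperp]
  define N where "N = (\<Sum>i<3. (norm (tproj p (L (e i))))\<^sup>2)"
  define c where "c i = G i \<bullet> p + L (e i) \<bullet> e i
      + (G i - (G i \<bullet> p + L (e i) \<bullet> e i) *\<^sub>R p - (L (e i) \<bullet> p) *\<^sub>R e i) \<bullet> p" for i
  have "qmul (qconj p) H = (\<Sum>i<3. qmul (qconj p) (G i) - c i *\<^sub>R qone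
      - (L (e i) \<bullet> p) *\<^sub>R qmul (qconj p) (e i)) + N *\<^sub>R q"
    unfolding H_def N_def c_def q_def tproj_def
    by (simp add: qmul_linear_simps qmul.sum_right qmul_qconj_self p_unit algebra_simps)
  moreover have "(\<Sum>i<3. (L (e i) \<bullet> p) *\<^sub>R qmul (qconj p) (e i))
      = - qmul (qconj p) (\<Sum>i<3. (z \<bullet> e i) *\<^sub>R e i)"
    using L_e_p by (simp add: qmul.sum_right qmul_linear_simps sum_negf)
  then have "(\<Sum>i<3. (L (e i) \<bullet> p) *\<^sub>R qmul (qconj p) (e i)) = - q"
    using z_expansion unfolding q_def by simp
  ultimately have "qperp q (qmul (qconj p) H) = (\<Sum>i<3. qperp q (qmul (qconj p) (G i))) + qperp q q"
    by (simp add: qperp_lin sum_subtractf qperp_qone[OF q_re] qperp_self[OF q_re q_unit])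
  moreover have "qperp q (F i) = qperp q (qmul (qconj p) (G i)) + 2 *\<^sub>R qperp q (qmul (qconj (e i)) (L (e i)))"
    for i
    unfolding F_def by (simp add: qperp_lin qperp_self[OF q_re q_unit])
  then have "qperp q (\<Sum>i<3. F i) = (\<Sum>i<3. qperp q (qmul (qconj p) (G i))) + 2 *\<^sub>R qperp q K"
    unfolding K_def by (simp add: qperp_lin sum.distrib scaleR_sum_right)
  ultimately show ?thesis
    using qperp_K qperp_self[OF q_re q_unit] by simp
qed

lemma tension_eq_qmul_qconj_H: "(\<Sum>i<3. tproj q (F i)) = qmul (qconj p) H"
proof -
  have "(\<Sum>i<3. tproj q (F i)) = qperp q (\<Sum>i<3. F i)"
    using tproj_eq_qperp[OF re_sum_F] by (simp add: linear_sum[OF linear_tproj])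
  also have "\<dots> = qperp q (qmul (qconj p) H)"
    by (rule qperp_qconj_H[symmetric])
  also have "\<dots> = qmul (qconj p) H"
  proof (rule qperp_eq_self)
    show "(qmul (qconj p) H)$1 = 0"
      using H_orthogonal_p by (simp add: re_qmul_qconj[unfolded inner_quat] inner_quat algebra_simps)
    show "qmul (qconj p) H \<bullet> q = 0"
      using H_orthogonal_z by (simp add: inner_qmul_qconj qmul_p_q)
  qed
  finally show ?thesis .
qed

theorem tension_eq_0_iff: "(\<Sum>i<3. tproj q (F i)) = 0 \<longleftrightarrow> H = 0"
  unfolding tension_eq_qmul_qconj_H
  by (metis qmul.zero_right qmul_qmul_qconj p_unit scaleR_one)

end


section \<open>Harmonicity of the map and of the field\<close>

context smooth_unit_field
begin

lemma tension_eq_0_iff_harmonic_field_at: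
  assumes great_circles: "\<forall>t. (gc p (\<zeta> p) has_vector_derivative \<zeta> (gc p (\<zeta> p) t)) (at t)"
    and p_in_V: "p \<in> V" and onb: "tangent_onb p e"
  shows "(\<Sum>i<3. map_hess (\<lambda>p. qmul (qconj p) (\<zeta> p)) p (e i)) = 0 \<longleftrightarrow>
    (\<Sum>i<3. cov2 \<zeta> p (e i)) + (\<Sum>i<3. (norm (cov \<zeta> p (e i)))\<^sup>2) *\<^sub>R \<zeta> p = 0"
proof -
  have frame: "great_circle_in_field V U W \<zeta> Z p (e i)" if "i < 3" for i
    by unfold_locales (use p_in_V onb that in \<open>auto simp: tangent_onb_def dot_square_norm\<close>)
  note along = great_circle_in_field.tangency_constraints[OF frame]
    great_circle_in_field.unit_length_constraints[OF frame]
    great_circle_in_field.map_hess_eq[OF frame]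
    great_circle_in_field.cov2_eq[OF frame] great_circle_in_field.cov_eq[OF frame]
  interpret J: framed_unit_field_jet p "\<zeta> p" "DZ p" e "\<lambda>i. gc_accel \<zeta> p (e i)"
    using p_in_V V_subset_U onb along linear_DZ DZ_tangent DZ_field[OF p_in_V great_circles]
      unit_sphere_V unit_tangent_inner
    by (intro framed_unit_field_jet.intro unit_field_jet.intro framed_unit_field_jet_axioms.intro) auto
  have "(\<Sum>i<3. map_hess (\<lambda>p. qmul (qconj p) (\<zeta> p)) p (e i)) = (\<Sum>i<3. tproj J.q (J.F i))"
    by (rule sum.cong) (simp_all add: along J.F_def J.q_def)
  moreover have "(\<Sum>i<3. cov2 \<zeta> p (e i)) + (\<Sum>i<3. (norm (cov \<zeta> p (e i)))\<^sup>2) *\<^sub>R \<zeta> p = J.H"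
    unfolding J.H_def using along by simp
  ultimately show ?thesis
    using J.tension_eq_0_iff by simp
qed

end

theorem theoremB:
  fixes V :: "quat set" and \<zeta> :: "quat \<Rightarrow> quat"
  assumes V_open: "openin (top_of_set S3) V"
    and unit_tangent: "\<forall>p\<in>V. norm (\<zeta> p) = 1 \<and> \<zeta> p \<bullet> p = 0"
    and smooth: "smooth_on_S3 V \<zeta>"
    and sat: "saturated V \<zeta>"
    and great_circles: "\<forall>p\<in>V. \<forall>t. (gc p (\<zeta> p) has_vector_derivative \<zeta> (gc p (\<zeta> p) t)) (at t)"
  shows "(\<forall>p\<in>V. qmul (qconj p) (\<zeta> p) \<in> S2)
    \<and> (\<forall>p\<in>V. \<forall>t. qmul (qconj (gc p (\<zeta> p) t)) (\<zeta> (gc p (\<zeta> p) t)) = qmul (qconj p) (\<zeta> p))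
    \<and> (harmonic_map_on V (\<lambda>p. qmul (qconj p) (\<zeta> p)) \<longleftrightarrow> harmonic_unit_field_on V \<zeta>)"
proof -
  obtain W where W: "open W" "V = S3 \<inter> W"
    using V_open by (auto simp: openin_open)
  obtain U Z where U: "open U" "V \<subseteq> U" "Cinf_on U Z" "\<forall>p\<in>V. Z p = \<zeta> p"
    using smooth unfolding smooth_on_S3_def by blast
  interpret smooth_unit_field V U W \<zeta> Z
    by unfold_locales (use U W unit_tangent in \<open>auto simp: Cinf_on_def\<close>)
  have "\<forall>p\<in>V. qmul (qconj p) (\<zeta> p) \<in> S2"
    using W unit_tangent qmul_qconj_in_S2 by (auto simp: S3_def)
  moreover have "\<forall>p\<in>V. \<forall>t. qmul (qconj (gc p (\<zeta> p) t)) (\<zeta> (gc p (\<zeta> p) t)) = qmul (qconj p) (\<zeta> p)"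
    using field_along_great_circle great_circles qmul_qconj_gc_velocity unit_sphere_V unit_tangent_inner
    by metis
  moreover have "harmonic_map_on V (\<lambda>p. qmul (qconj p) (\<zeta> p)) \<longleftrightarrow> harmonic_unit_field_on V \<zeta>"
    unfolding harmonic_map_on_def harmonic_unit_field_on_def
    using tension_eq_0_iff_harmonic_field_at great_circles by blast
  ultimately show ?thesis by blast
qed

end
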